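(* Suppose the initial condition is independent of the graph, i.e. $\mathbb P=\mathbb P_0\otimes\mathbb P_g$, and that $\liminf_n p_n^3n^{1-\varepsilon}=\infty$ for some $\varepsilon\in(0,1)$. Then for every $r>1$, $$\lim_{n\to\infty}\mathbb E_0\big[\|\hat\eta^n_0\|_{-r}^2\big]=0,\quad\mathbb P_g\text{-a.s.}$$ In particular the moment bound $\sup_n\mathbb E_0\|\hat\eta^n_0\|_{-r}^{1+\alpha}<\infty$ holds $\mathbb P_g$-a.s. for every $\alpha\in(0,1)$ and the limit of $\hat\eta^n_0$ is $0$.
   Context: $\mathbb T=\mathbb R/2\pi\mathbb Z$. For each $n\ge2$, $p_n\in(0,1]$ and $(\xi^{(n)}_{ij})_{i,j\le n}$ are i.i.d. Bernoulli$(p_n)$ (law $\mathbb P_g$); $(\theta^{i,n}_0)_{i\le n}$ are $\mathbb T$-valued random variables with law $\mathbb P_0$ (expectation $\mathbb E_0$), arbitrary otherwise. $\hat\xi^{(n)}_{ij}=\xi^{(n)}_{ij}/p_n-1$ and $\hat\eta^n_0=n^{-3/2}\sum_{i,j=1}^n\hat\xi^{(n)}_{ij}\delta_{(\theta^{i,n}_0,\theta^{j,n}_0)}$, viewed in $H^{-r}(\mathbb T^2)$, the dual of the $L^2$-Sobolev space $H^r(\mathbb T^2)$, with norm $\|\cdot\|_{-r}$. *)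

theory Defs
  imports "HOL-Probability.Probability"
begin

text \<open>Fourier coefficients (at frequency k in Z^2) of the finite signed atomic measure
  sum over a in A of w a times the Dirac mass at x a, on the torus T^2 = (R/2 pi Z)^2.
  Points of T are represented by real representatives; the exponentials are
  2 pi-periodic, so the value does not depend on the choice of representatives.\<close>
definition fourier_atoms ::
  "'a set \<Rightarrow> ('a \<Rightarrow> real) \<Rightarrow> ('a \<Rightarrow> real \<times> real) \<Rightarrow> int \<times> int \<Rightarrow> complex" where
  "fourier_atoms A w x k =
     (\<Sum>a\<in>A. complex_of_real (w a) *
        exp (- \<i> * complex_of_real (real_of_int (fst k) * fst (x a) + real_of_int (snd k) * snd (x a))))
     / complex_of_real (2 * pi)"

definition Hneg_norm_sq ::
  "real \<Rightarrow> 'a set \<Rightarrow> ('a \<Rightarrow> real) \<Rightarrow> ('a \<Rightarrow> real \<times> real) \<Rightarrow> real" where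
  "Hneg_norm_sq r A w x =
     (\<Sum>\<^sub>\<infinity>k\<in>(UNIV :: (int \<times> int) set).
        (1 + real_of_int (fst k)^2 + real_of_int (snd k)^2) powr (-r) * (cmod (fourier_atoms A w x k))^2)"

definition xihat :: "real \<Rightarrow> bool \<Rightarrow> real" where
  "xihat p b = (if b then 1 else 0) / p - 1"

text \<open>Squared H^{-r} norm of eta-hat^n_0 = n^{-3/2} sum_{i,j} xihat_ij delta_(theta_i, theta_j),
  indices i, j ranging over {0..<n}.\<close>
definition eta_norm_sq ::
  "real \<Rightarrow> nat \<Rightarrow> real \<Rightarrow> (nat \<Rightarrow> nat \<Rightarrow> bool) \<Rightarrow> (nat \<Rightarrow> real) \<Rightarrow> real" where
  "eta_norm_sq r n p g th =
     Hneg_norm_sq r ({..<n} \<times> {..<n})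
       (\<lambda>(i, j). real n powr (-3/2) * xihat p (g i j))
       (\<lambda>(i, j). (th i, th j))"

end

(*
  Expand the H^{-r} norm of eta-hat in Fourier series. Each Fourier coefficient is a sum of n^2
  independent centred terms of size n^{-3/2}/p, so by Hoeffding's inequality it exceeds delta with
  probability at most exp (- delta^2 n p^2), while it is always bounded by sqrt n / p. Frequencies
  outside the box |k| <= K contribute at most K^{1-r} n/p^2, by the decay of the Sobolev weight.
  Inside the box, a union bound, Tonelli and Markov's inequality show that, except for graphs in an
  exceptional set, the initial conditions producing a large coefficient have P_0-mass at most eta.
  With delta = n^{-1/12}, K = n^{3/(r-1)} and eta = p^2/n^2 the exceptional probabilities are
  summable and, off the exceptional set, E_0 ||eta-hat||^2 is bounded by a deterministic null
  sequence; Borel-Cantelli concludes.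
*)

theory Submission
  imports Defs "HOL-Real_Asymp.Real_Asymp"
begin

section \<open>Sobolev weights on the dual lattice\<close>

lemma power2_powr_half:
  assumes "(x::real) > 0"
  shows "(x\<^sup>2) powr (c/2) = x powr c"
proof -
  have "(x\<^sup>2) powr (c/2) = (x powr 2) powr (c/2)"
    using assms by (simp add: powr_realpow)
  also have "\<dots> = x powr c"
    by (simp add: powr_powr)
  finally show ?thesis .
qed

lemma summable_on_one_plus_square_powr_nat:
  assumes "r > 1"
  shows "(\<lambda>j::nat. (1 + real j ^ 2) powr (-r/2)) summable_on UNIV"
proof -
  have "summable (\<lambda>j::nat. (1 + real j ^ 2) powr (-r/2))"
  proof (rule summable_comparison_test_ev)
    show "summable (\<lambda>j::nat. real j powr (-r))"
      using assms by (subst summable_real_powr_iff) auto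
    show "\<forall>\<^sub>F j in sequentially. norm ((1 + real j ^ 2) powr (-r/2)) \<le> real j powr (-r)"
      using eventually_ge_at_top[of "1::nat"]
    proof eventually_elim
      case (elim j)
      have "(1 + real j ^ 2) powr (-r/2) \<le> (real j ^ 2) powr (-r/2)"
        using elim assms by (intro powr_mono2') auto
      also have "(real j ^ 2) powr (-r/2) = real j powr (-r)"
        using elim power2_powr_half[of "real j" "-r"] by simp
      finally show ?case by simp
    qed
  qed
  then show ?thesis by (subst summable_on_UNIV_nonneg_real_iff) auto
qed

lemma summable_on_one_plus_square_powr_int:
  assumes "r > 1"
  shows "(\<lambda>a::int. (1 + real_of_int a ^ 2) powr (-r/2)) summable_on UNIV"
proof -
  let ?u = "\<lambda>a::int. (1 + real_of_int a ^ 2) powr (-r/2)"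
  have "?u summable_on range int"
    using summable_on_one_plus_square_powr_nat[OF assms]
    by (subst summable_on_reindex) (auto simp: o_def)
  moreover have "?u summable_on range (\<lambda>j. - int j)"
    using summable_on_one_plus_square_powr_nat[OF assms]
    by (subst summable_on_reindex) (auto simp: o_def inj_on_def)
  moreover have "UNIV = range int \<union> range (\<lambda>j. - int j)"
    by (auto simp: image_iff) (metis int_cases2 minus_minus)
  ultimately show ?thesis using summable_on_union by metis
qed

definition sobolev_weight :: "real \<Rightarrow> int \<times> int \<Rightarrow> real" where
  "sobolev_weight r k = (1 + real_of_int (fst k)^2 + real_of_int (snd k)^2) powr (-r)"

lemma sobolev_weight_nonneg: "sobolev_weight r k \<ge> 0"
  by (simp add: sobolev_weight_def)

lemma sobolev_weight_le_product:
  assumes "r \<ge> 0"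
  shows "sobolev_weight r (a, b) \<le> (1 + real_of_int a ^ 2) powr (-r/2) * (1 + real_of_int b ^ 2) powr (-r/2)"
proof -
  define A B where "A = real_of_int a ^ 2" and "B = real_of_int b ^ 2"
  have AB: "A \<ge> 0" "B \<ge> 0" by (simp_all add: A_def B_def)
  have "(1 + A) * (1 + B) \<le> (1 + A + B)\<^sup>2"
    using AB by (simp add: power2_eq_square algebra_simps)
  then have "((1 + A + B)\<^sup>2) powr (-r/2) \<le> ((1 + A) * (1 + B)) powr (-r/2)"
    using AB assms by (intro powr_mono2') auto
  moreover have "((1 + A + B)\<^sup>2) powr (-r/2) = (1 + A + B) powr (-r)"
    using AB by (intro power2_powr_half) simp
  ultimately show ?thesis
    using AB by (simp add: sobolev_weight_def A_def B_def powr_mult)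
qed

lemma sobolev_weight_summable:
  assumes "r > 1"
  shows "sobolev_weight r summable_on UNIV"
proof (rule summable_on_comparison_test)
  let ?u = "\<lambda>a::int. (1 + real_of_int a ^ 2) powr (-r/2)"
  have u: "?u summable_on UNIV"
    by (rule summable_on_one_plus_square_powr_int[OF assms])
  have "(\<lambda>(a, b). ?u a * ?u b) summable_on UNIV \<times> UNIV"
    using u by (intro summable_on_SigmaI[where g = "\<lambda>a. ?u a * infsum ?u UNIV"])
      (auto intro: has_sum_cmult_right summable_on_cmult_left)
  then show "(\<lambda>(a, b). ?u a * ?u b) summable_on UNIV"
    by simp
  show "sobolev_weight r k \<le> (\<lambda>(a, b). ?u a * ?u b) k" for k
    using assms sobolev_weight_le_product[of r "fst k" "snd k"] by (cases k) simp
qed (rule sobolev_weight_nonneg)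

section \<open>Fourier coefficients of atomic measures\<close>

lemma Hneg_norm_sq_eq:
  "Hneg_norm_sq r A w x = (\<Sum>\<^sub>\<infinity>k. sobolev_weight r k * (cmod (fourier_atoms A w x k))\<^sup>2)"
  by (simp add: Hneg_norm_sq_def sobolev_weight_def)

lemma Hneg_norm_sq_nonneg: "Hneg_norm_sq r A w x \<ge> 0"
  unfolding Hneg_norm_sq_def by (intro infsum_nonneg) simp

definition phase :: "('a \<Rightarrow> real \<times> real) \<Rightarrow> int \<times> int \<Rightarrow> 'a \<Rightarrow> real" where
  "phase x k a = real_of_int (fst k) * fst (x a) + real_of_int (snd k) * snd (x a)"

lemma Re_fourier_atoms:
  "Re (fourier_atoms A w x k) = (\<Sum>a\<in>A. cos (phase x k a) * w a / (2 * pi))"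
proof -
  have "cos (- a - b) = cos (a + b)" for a b :: real
    by (metis cos_minus minus_add_distrib diff_conv_add_uminus)
  then show ?thesis
    unfolding fourier_atoms_def phase_def
    by (simp add: Re_divide_of_real Re_sum Re_exp Im_exp sum_divide_distrib mult.commute)
qed

lemma Im_fourier_atoms:
  "Im (fourier_atoms A w x k) = (\<Sum>a\<in>A. - sin (phase x k a) * w a / (2 * pi))"
proof -
  have "sin (- a - b) = - sin (a + b)" for a b :: real
    by (metis sin_minus minus_add_distrib diff_conv_add_uminus)
  then show ?thesis
    unfolding fourier_atoms_def phase_def
    by (simp add: Im_divide_of_real Im_sum Re_exp Im_exp sum_divide_distrib mult.commute)
qed

lemma norm_fourier_atoms_le:
  assumes "\<And>a. a \<in> A \<Longrightarrow> \<bar>w a\<bar> \<le> c"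
  shows "cmod (fourier_atoms A w x k) \<le> real (card A) * c / (2 * pi)"
proof -
  let ?e = "\<lambda>a. exp (- \<i> * complex_of_real (real_of_int (fst k) * fst (x a) + real_of_int (snd k) * snd (x a)))"
  have "cmod (\<Sum>a\<in>A. complex_of_real (w a) * ?e a) \<le> (\<Sum>a\<in>A. cmod (complex_of_real (w a) * ?e a))"
    by (rule norm_sum)
  also have "\<dots> = (\<Sum>a\<in>A. \<bar>w a\<bar>)"
    by (simp add: norm_mult norm_exp_eq_Re)
  also have "\<dots> \<le> real (card A) * c"
    using assms sum_bounded_above[of A "\<lambda>a. \<bar>w a\<bar>" c] by simp
  finally show ?thesis
    unfolding fourier_atoms_def by (simp add: norm_divide divide_right_mono)
qed

definition freq_box :: "real \<Rightarrow> (int \<times> int) set" where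
  "freq_box K = {k. \<bar>real_of_int (fst k)\<bar> \<le> K \<and> \<bar>real_of_int (snd k)\<bar> \<le> K}"

lemma freq_box_subset: "freq_box K \<subseteq> {-\<lceil>K\<rceil>..\<lceil>K\<rceil>} \<times> {-\<lceil>K\<rceil>..\<lceil>K\<rceil>}"
proof -
  have "\<bar>a\<bar> \<le> \<lceil>K\<rceil>" if "\<bar>real_of_int a\<bar> \<le> K" for a :: int
    by (metis ceiling_mono ceiling_of_int of_int_abs that)
  then show ?thesis
    by (force simp: freq_box_def abs_le_iff)
qed

lemma finite_freq_box: "finite (freq_box K)"
  by (rule finite_subset[OF freq_box_subset]) auto

lemma card_freq_box_le:
  assumes "K \<ge> 0"
  shows "real (card (freq_box K)) \<le> (2 * K + 3)\<^sup>2"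
proof -
  have "card (freq_box K) \<le> card ({-\<lceil>K\<rceil>..\<lceil>K\<rceil>} \<times> {-\<lceil>K\<rceil>..\<lceil>K\<rceil>})"
    by (rule card_mono[OF _ freq_box_subset]) simp
  also have "\<dots> = nat (2 * \<lceil>K\<rceil> + 1) ^ 2"
    by (simp add: card_cartesian_product power2_eq_square)
  finally have "real (card (freq_box K)) \<le> real (nat (2 * \<lceil>K\<rceil> + 1)) ^ 2"
    by (metis of_nat_le_iff of_nat_power)
  also have "\<dots> \<le> (2 * K + 3)\<^sup>2"
    using assms ceiling_correct[of K] by (intro power_mono) auto
  finally show ?thesis .
qed

lemma sobolev_weight_outside_freq_box:
  assumes "r \<ge> 1" "K > 0" "k \<notin> freq_box K"
  shows "sobolev_weight r k \<le> K powr (1 - r) * sobolev_weight ((r + 1) / 2) k"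
proof -
  define q where "q = 1 + real_of_int (fst k)^2 + real_of_int (snd k)^2"
  have "K \<le> \<bar>real_of_int (fst k)\<bar> \<or> K \<le> \<bar>real_of_int (snd k)\<bar>"
    using assms(3) by (auto simp: freq_box_def)
  then have "K\<^sup>2 \<le> real_of_int (fst k)^2 \<or> K\<^sup>2 \<le> real_of_int (snd k)^2"
    using assms(2) by (metis abs_le_square_iff abs_of_pos)
  then have "K\<^sup>2 \<le> q"
    unfolding q_def
    using zero_le_power2[of "real_of_int (fst k)"] zero_le_power2[of "real_of_int (snd k)"] by linarith
  then have "q powr ((1 - r) / 2) \<le> (K\<^sup>2) powr ((1 - r) / 2)"
    using assms by (intro powr_mono2') auto
  also have "\<dots> = K powr (1 - r)"
    using assms by (simp add: power2_powr_half)
  finally have "q powr (- ((r + 1) / 2)) * q powr ((1 - r) / 2) \<le> q powr (- ((r + 1) / 2)) * K powr (1 - r)"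
    by (intro mult_left_mono) auto
  then show ?thesis
    by (simp add: sobolev_weight_def q_def [symmetric] powr_add [symmetric] mult.commute add_divide_distrib diff_divide_distrib)
qed

lemma Hneg_summand_le:
  assumes "\<And>k. cmod (fourier_atoms A w x k) \<le> M"
  shows "sobolev_weight r k * (cmod (fourier_atoms A w x k))\<^sup>2 \<le> M\<^sup>2 * sobolev_weight r k"
proof -
  have "(cmod (fourier_atoms A w x k))\<^sup>2 \<le> M\<^sup>2"
    using assms[of k] by (intro power_mono) auto
  then show ?thesis
    by (metis mult.commute mult_left_mono sobolev_weight_nonneg)
qed

lemma Hneg_summands_summable:
  assumes "r > 1" "\<And>k. cmod (fourier_atoms A w x k) \<le> M"
  shows "(\<lambda>k. sobolev_weight r k * (cmod (fourier_atoms A w x k))\<^sup>2) summable_on UNIV"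
proof (rule summable_on_comparison_test)
  show "(\<lambda>k. M\<^sup>2 * sobolev_weight r k) summable_on UNIV"
    using assms(1) by (intro summable_on_cmult_right sobolev_weight_summable)
qed (simp_all add: Hneg_summand_le[OF assms(2)] sobolev_weight_nonneg)

lemma Hneg_norm_sq_le_sup_bound:
  assumes "r > 1" "\<And>k. cmod (fourier_atoms A w x k) \<le> M"
  shows "Hneg_norm_sq r A w x \<le> M\<^sup>2 * (\<Sum>\<^sub>\<infinity>k. sobolev_weight r k)"
proof -
  have "(\<Sum>\<^sub>\<infinity>k. sobolev_weight r k * (cmod (fourier_atoms A w x k))\<^sup>2) \<le> (\<Sum>\<^sub>\<infinity>k. M\<^sup>2 * sobolev_weight r k)"
    using assms by (intro infsum_mono Hneg_summands_summable Hneg_summand_le summable_on_cmult_right sobolev_weight_summable)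
  then show ?thesis
    by (simp add: Hneg_norm_sq_eq infsum_cmult_right')
qed

lemma Hneg_norm_sq_le_of_small_on_freq_box:
  assumes r: "r > 1" and K: "K > 0" and M: "\<And>k. cmod (fourier_atoms A w x k) \<le> M"
    and small: "\<And>k. k \<in> freq_box K \<Longrightarrow>
                  \<bar>Re (fourier_atoms A w x k)\<bar> < \<delta> \<and> \<bar>Im (fourier_atoms A w x k)\<bar> < \<delta>"
  shows "Hneg_norm_sq r A w x \<le> 2 * \<delta>\<^sup>2 * (\<Sum>\<^sub>\<infinity>k. sobolev_weight r k)
           + K powr (1 - r) * M\<^sup>2 * (\<Sum>\<^sub>\<infinity>k. sobolev_weight ((r + 1) / 2) k)"
proof -
  define F where "F = fourier_atoms A w x"
  define s where "s = (r + 1) / 2"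
  have s: "s > 1" using r by (simp add: s_def)
  let ?g = "\<lambda>k. 2 * \<delta>\<^sup>2 * sobolev_weight r k + K powr (1 - r) * M\<^sup>2 * sobolev_weight s k"
  have "sobolev_weight r k * (cmod (F k))\<^sup>2 \<le> ?g k" for k
  proof (cases "k \<in> freq_box K")
    case True
    then have "\<bar>Re (F k)\<bar> \<le> \<bar>\<delta>\<bar>" "\<bar>Im (F k)\<bar> \<le> \<bar>\<delta>\<bar>"
      using small[of k] by (auto simp: F_def)
    then have "(cmod (F k))\<^sup>2 \<le> 2 * \<delta>\<^sup>2"
      unfolding cmod_power2 abs_le_square_iff by simp
    then have "sobolev_weight r k * (cmod (F k))\<^sup>2 \<le> 2 * \<delta>\<^sup>2 * sobolev_weight r k"
      by (metis mult.commute mult_left_mono sobolev_weight_nonneg)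
    moreover have "0 \<le> K powr (1 - r) * M\<^sup>2 * sobolev_weight s k"
      by (simp add: sobolev_weight_nonneg)
    ultimately show ?thesis by linarith
  next
    case False
    have "sobolev_weight r k * (cmod (F k))\<^sup>2 \<le> M\<^sup>2 * sobolev_weight r k"
      unfolding F_def by (rule Hneg_summand_le[OF M])
    also have "\<dots> \<le> M\<^sup>2 * (K powr (1 - r) * sobolev_weight s k)"
      using r K False unfolding s_def by (intro mult_left_mono sobolev_weight_outside_freq_box) auto
    moreover have "0 \<le> 2 * \<delta>\<^sup>2 * sobolev_weight r k"
      by (simp add: sobolev_weight_nonneg)
    ultimately show ?thesis by (simp add: algebra_simps)
  qed
  then have "(\<Sum>\<^sub>\<infinity>k. sobolev_weight r k * (cmod (F k))\<^sup>2) \<le> (\<Sum>\<^sub>\<infinity>k. ?g k)"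
    using r s unfolding F_def
    by (intro infsum_mono Hneg_summands_summable[OF r M] summable_on_add summable_on_cmult_right
          sobolev_weight_summable)
  also have "\<dots> = 2 * \<delta>\<^sup>2 * (\<Sum>\<^sub>\<infinity>k. sobolev_weight r k) + K powr (1 - r) * M\<^sup>2 * (\<Sum>\<^sub>\<infinity>k. sobolev_weight s k)"
    using r s by (simp add: infsum_add summable_on_cmult_right sobolev_weight_summable infsum_cmult_right')
  finally show ?thesis
    by (simp add: Hneg_norm_sq_eq F_def s_def)
qed

lemma (in prob_space) Hoeffding_abs_ge_centred:
  fixes Y :: "'i \<Rightarrow> 'a \<Rightarrow> real" and C :: real
  assumes I: "finite I" "I \<noteq> {}" and indep: "indep_vars (\<lambda>_. borel) Y I"
    and bound: "\<And>i x. i \<in> I \<Longrightarrow> \<bar>Y i x\<bar> \<le> C"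
    and centred: "\<And>i. i \<in> I \<Longrightarrow> expectation (Y i) = 0"
    and "\<delta> \<ge> 0" "C > 0"
  shows "prob {x \<in> space M. \<delta> \<le> \<bar>\<Sum>i\<in>I. Y i x\<bar>} \<le> 2 * exp (- \<delta>\<^sup>2 / (2 * real (card I) * C\<^sup>2))"
proof -
  have "\<And>i. i \<in> I \<Longrightarrow> AE x in M. Y i x \<in> {- C..C}"
    using bound by (intro AE_I2) (meson abs_le_iff atLeastAtMost_iff minus_le_iff)
  then interpret H: Hoeffding_ineq M I Y "\<lambda>_. - C" "\<lambda>_. C" "\<Sum>i\<in>I. expectation (Y i)"
    using I indep by unfold_locales auto
  have "(C - - C)\<^sup>2 = 4 * C\<^sup>2"
    by (simp add: power2_eq_square)
  then have width: "(\<Sum>i\<in>I. (C - - C)\<^sup>2) = 2 * (2 * real (card I) * C\<^sup>2)"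
    by simp
  have "prob {x \<in> space M. \<delta> \<le> \<bar>(\<Sum>i\<in>I. Y i x) - (\<Sum>i\<in>I. expectation (Y i))\<bar>}
          \<le> 2 * exp (-2 * \<delta>\<^sup>2 / (\<Sum>i\<in>I. (C - - C)\<^sup>2))"
    using assms by (intro H.Hoeffding_ineq_abs_ge) (auto simp: width card_gt_0_iff)
  then show ?thesis
    by (simp add: centred width mult.assoc)
qed

lemma (in prob_space) AE_tendsto_zero_outside_summable_events:
  fixes f :: "nat \<Rightarrow> 'a \<Rightarrow> real"
  assumes events: "\<forall>\<^sub>F n in sequentially. A n \<in> events \<and> prob (A n) \<le> b n" and b: "summable b"
    and bound: "\<forall>\<^sub>F n in sequentially. \<forall>x\<in>space M - A n. 0 \<le> f n x \<and> f n x \<le> c n"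
    and c: "c \<longlonglongrightarrow> 0"
  shows "AE x in M. (\<lambda>n. f n x) \<longlonglongrightarrow> 0"
proof -
  obtain N where N: "\<And>n. N \<le> n \<Longrightarrow> A n \<in> events \<and> prob (A n) \<le> b n"
    and N_bound: "\<And>n x. N \<le> n \<Longrightarrow> x \<in> space M - A n \<Longrightarrow> 0 \<le> f n x \<and> f n x \<le> c n"
    using eventually_conj[OF events bound] unfolding eventually_sequentially by blast
  define A' where "A' n = (if N \<le> n then A n else {})" for n
  have "AE x in M. \<forall>\<^sub>F n in sequentially. x \<in> space M - A' n"
  proof (rule borel_cantelli_AE1)
    show "A' n \<in> events" for n
      using N by (simp add: A'_def)
    then show "emeasure M (A' n) < \<infinity>" for n
      by (simp add: emeasure_eq_measure)
    have "\<forall>\<^sub>F n in sequentially. norm (prob (A' n)) \<le> b n"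
      using eventually_ge_at_top[of N] by (rule eventually_mono) (simp add: A'_def N)
    then show "summable (\<lambda>n. prob (A' n))"
      by (rule summable_comparison_test_ev[OF _ b])
  qed
  then show ?thesis
  proof (rule AE_mp, intro AE_I2 impI)
    fix x assume x: "x \<in> space M" and ev: "\<forall>\<^sub>F n in sequentially. x \<in> space M - A' n"
    from ev eventually_ge_at_top[of N] have "\<forall>\<^sub>F n in sequentially. 0 \<le> f n x \<and> f n x \<le> c n"
      by eventually_elim (simp add: A'_def N_bound)
    then show "(\<lambda>n. f n x) \<longlonglongrightarrow> 0"
      by (intro tendsto_sandwich[OF _ _ tendsto_const c]) (simp_all add: eventually_conj_iff)
  qed
qed

lemma eventually_powr_le_square_of_growth:
  fixes p :: "nat \<Rightarrow> real"
  assumes growth: "liminf (\<lambda>n. ereal (p n ^ 3 * real n powr (1 - \<epsilon>))) = \<infinity>" and "\<epsilon> \<ge> 0"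
    and pos: "\<forall>\<^sub>F n in sequentially. 0 < p n"
  shows "\<forall>\<^sub>F n in sequentially. real n powr (-2/3) \<le> p n ^ 2"
proof -
  have "(\<lambda>n. ereal (p n ^ 3 * real n powr (1 - \<epsilon>))) \<longlonglongrightarrow> \<infinity>"
    using growth by (simp add: liminf_PInfty)
  then have "\<forall>\<^sub>F n in sequentially. ereal 1 < ereal (p n ^ 3 * real n powr (1 - \<epsilon>))"
    by (rule order_tendstoD) simp
  with pos eventually_ge_at_top[of "1::nat"]
  show ?thesis
  proof eventually_elim
    case (elim n)
    then have n: "real n \<ge> 1" and p: "p n > 0" by auto
    have "real n powr (1 - \<epsilon>) \<le> real n"
      using n assms(2) powr_mono[of "1 - \<epsilon>" 1 "real n"] by simp
    then have "p n ^ 3 * real n powr (1 - \<epsilon>) \<le> p n ^ 3 * real n"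
      using p by (intro mult_left_mono) auto
    moreover have "1 < p n ^ 3 * real n powr (1 - \<epsilon>)"
      using elim by simp
    ultimately have "1 \<le> p n ^ 3 * real n"
      by linarith
    then have "1 / real n \<le> p n ^ 3"
      using n by (simp add: field_simps)
    moreover have "(real n powr (-1/3)) ^ 3 = real n powr (-1)"
      using n by (simp add: powr_power del: powr_neg_one')
    moreover have "real n powr (-1) = 1 / real n"
      using n by (intro powr_neg_one) simp
    ultimately have "(real n powr (-1/3)) ^ 3 \<le> p n ^ 3"
      by simp
    then have "real n powr (-1/3) \<le> p n"
      using p power_mono_iff[of "real n powr (-1/3)" "p n" 3] by simp
    then have "(real n powr (-1/3))\<^sup>2 \<le> (p n)\<^sup>2"
      by (intro power_mono) auto
    also have "(real n powr (-1/3))\<^sup>2 = real n powr (-2/3)"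
      using n by (simp add: powr_power)
    finally show ?case .
  qed
qed

section \<open>The rescaled adjacency measure for a fixed number of vertices\<close>

lemma abs_xihat_le: "0 < p \<Longrightarrow> p \<le> 1 \<Longrightarrow> \<bar>xihat p b\<bar> \<le> 1 / p"
  by (auto simp: xihat_def field_simps)

lemma eta_norm_sq_nonneg: "eta_norm_sq r n p g \<theta> \<ge> 0"
  by (simp add: eta_norm_sq_def Hneg_norm_sq_nonneg)

locale random_graph_with_initial_data =
  G: prob_space Mg + Z: prob_space M0
  for Mg :: "'b measure" and M0 :: "'a measure" +
  fixes n :: nat and p :: real and \<xi> :: "nat \<Rightarrow> nat \<Rightarrow> 'b \<Rightarrow> bool" and \<theta> :: "nat \<Rightarrow> 'a \<Rightarrow> real"
  assumes n_pos: "0 < n" and p_pos: "0 < p" and p_le_1: "p \<le> 1"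
    and xi_measurable: "\<And>i j. i < n \<Longrightarrow> j < n \<Longrightarrow> \<xi> i j \<in> measurable Mg (count_space UNIV)"
    and xi_bernoulli: "\<And>i j. i < n \<Longrightarrow> j < n \<Longrightarrow> G.prob {\<omega> \<in> space Mg. \<xi> i j \<omega>} = p"
    and xi_indep: "G.indep_vars (\<lambda>_. count_space UNIV) (\<lambda>(i, j). \<xi> i j) ({..<n} \<times> {..<n})"
    and theta_measurable: "\<And>i. \<theta> i \<in> borel_measurable M0"
begin

definition vertex_pairs :: "(nat \<times> nat) set" where
  "vertex_pairs = {..<n} \<times> {..<n}"

definition eta_weight :: "'b \<Rightarrow> nat \<times> nat \<Rightarrow> real" where
  "eta_weight \<omega> = (\<lambda>(i, j). real n powr (-3/2) * xihat p (\<xi> i j \<omega>))"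

definition eta_atom :: "'a \<Rightarrow> nat \<times> nat \<Rightarrow> real \<times> real" where
  "eta_atom x = (\<lambda>(i, j). (\<theta> i x, \<theta> j x))"

definition eta_coeff :: "'b \<Rightarrow> 'a \<Rightarrow> int \<times> int \<Rightarrow> complex" where
  "eta_coeff \<omega> x = fourier_atoms vertex_pairs (eta_weight \<omega>) (eta_atom x)"

lemma eta_norm_sq_eq:
  "eta_norm_sq r n p (\<lambda>i j. \<xi> i j \<omega>) (\<lambda>i. \<theta> i x) = Hneg_norm_sq r vertex_pairs (eta_weight \<omega>) (eta_atom x)"
  by (simp add: eta_norm_sq_def vertex_pairs_def eta_weight_def eta_atom_def)

lemma abs_eta_weight_le: "\<bar>eta_weight \<omega> a\<bar> \<le> real n powr (-3/2) / p"
proof -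
  obtain i j where a: "a = (i, j)" by force
  have "\<bar>eta_weight \<omega> a\<bar> = real n powr (-3/2) * \<bar>xihat p (\<xi> i j \<omega>)\<bar>"
    by (simp add: eta_weight_def a abs_mult)
  also have "\<dots> \<le> real n powr (-3/2) * (1 / p)"
    using abs_xihat_le[OF p_pos p_le_1] by (intro mult_left_mono) auto
  finally show ?thesis by simp
qed

lemma eta_weight_measurable:
  assumes "a \<in> vertex_pairs"
  shows "(\<lambda>\<omega>. eta_weight \<omega> a) \<in> borel_measurable Mg"
proof -
  obtain i j where a: "a = (i, j)" "i < n" "j < n"
    using assms by (auto simp: vertex_pairs_def)
  have "(\<lambda>\<omega>. xihat p (\<xi> i j \<omega>)) \<in> borel_measurable Mg"
    using xi_measurable[OF a(2,3)] by (rule measurable_compose) simp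
  then show ?thesis
    by (simp add: eta_weight_def a)
qed

lemma expectation_eta_weight:
  assumes "a \<in> vertex_pairs"
  shows "G.expectation (\<lambda>\<omega>. eta_weight \<omega> a) = 0"
proof -
  obtain i j where a: "a = (i, j)" "i < n" "j < n"
    using assms by (auto simp: vertex_pairs_def)
  define S where "S = {\<omega> \<in> space Mg. \<xi> i j \<omega>}"
  have S: "S \<in> G.events"
    using measurable_sets[OF xi_measurable[OF a(2,3)], of "{True}"] by (simp add: S_def vimage_def Int_def conj_commute)
  have "G.expectation (\<lambda>\<omega>. eta_weight \<omega> a) = G.expectation (\<lambda>\<omega>. real n powr (-3/2) * (indicator S \<omega> / p - 1))"
    by (intro Bochner_Integration.integral_cong) (auto simp: eta_weight_def xihat_def a S_def)
  also have "\<dots> = real n powr (-3/2) * (G.prob S / p - 1)"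
  proof -
    have "G.expectation (\<lambda>\<omega>. indicator S \<omega> / p - 1) = G.expectation (\<lambda>\<omega>. indicator S \<omega> / p) - G.expectation (\<lambda>\<omega>. 1)"
      using S by (intro Bochner_Integration.integral_diff integrable_divide_zero integrable_real_indicator)
        (auto simp: less_top[symmetric])
    then show ?thesis
      using S by (simp add: G.prob_space)
  qed
  finally show ?thesis
    using xi_bernoulli[OF a(2,3)] p_pos by (simp add: S_def)
qed

lemma card_vertex_pairs: "card vertex_pairs = n\<^sup>2"
  by (simp add: vertex_pairs_def power2_eq_square)

lemma prob_abs_weighted_eta_sum_ge:
  assumes c: "\<And>a. \<bar>c a\<bar> \<le> 1" and \<delta>: "\<delta> \<ge> 0"
  shows "G.prob {\<omega> \<in> space Mg. \<delta> \<le> \<bar>\<Sum>a\<in>vertex_pairs. c a * eta_weight \<omega> a / (2 * pi)\<bar>}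
           \<le> 2 * exp (- (\<delta>\<^sup>2 * real n * p\<^sup>2))"
proof -
  define C where "C = real n powr (-3/2) / (2 * pi * p)"
  define Y where "Y a \<omega> = c a * eta_weight \<omega> a / (2 * pi)" for a \<omega>
  have C: "C > 0"
    using n_pos p_pos by (simp add: C_def)
  have "G.indep_vars (\<lambda>_. borel) (\<lambda>a \<omega>. c a * (real n powr (-3/2) * xihat p ((\<lambda>(i, j). \<xi> i j) a \<omega>)) / (2 * pi)) vertex_pairs"
    unfolding vertex_pairs_def by (rule G.indep_vars_compose2[OF xi_indep]) simp
  then have indep: "G.indep_vars (\<lambda>_. borel) Y vertex_pairs"
    by (rule G.indep_vars_cong[THEN iffD1, rotated 3]) (auto simp: Y_def eta_weight_def fun_eq_iff)
  have bound: "\<bar>Y a \<omega>\<bar> \<le> C" for a \<omega>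
  proof -
    have "\<bar>Y a \<omega>\<bar> = \<bar>c a\<bar> * \<bar>eta_weight \<omega> a\<bar> / (2 * pi)"
      by (simp add: Y_def abs_mult)
    also have "\<dots> \<le> 1 * (real n powr (-3/2) / p) / (2 * pi)"
      using c[of a] abs_eta_weight_le[of \<omega> a] by (intro divide_right_mono mult_mono) auto
    finally show ?thesis
      by (simp add: C_def mult.commute)
  qed
  have centred: "G.expectation (Y a) = 0" if "a \<in> vertex_pairs" for a
  proof -
    have "Y a = (\<lambda>\<omega>. c a / (2 * pi) * eta_weight \<omega> a)"
      by (simp add: Y_def fun_eq_iff)
    then show ?thesis
      using expectation_eta_weight[OF that] by simp
  qed
  have width: "2 * real (card vertex_pairs) * C\<^sup>2 = 1 / (2 * pi\<^sup>2 * real n * p\<^sup>2)"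
  proof -
    have "(real n powr (-3/2))\<^sup>2 = real n powr (-3)"
      using n_pos by (simp add: powr_power)
    also have "\<dots> = 1 / real n ^ 3"
      using n_pos by (simp add: powr_minus_divide powr_numeral)
    finally have "C\<^sup>2 = 1 / real n ^ 3 / (2 * pi * p)\<^sup>2"
      by (simp add: C_def power_divide)
    then show ?thesis
      using n_pos p_pos by (simp add: card_vertex_pairs field_simps power2_eq_square power3_eq_cube)
  qed
  have "G.prob {\<omega> \<in> space Mg. \<delta> \<le> \<bar>\<Sum>a\<in>vertex_pairs. Y a \<omega>\<bar>}
          \<le> 2 * exp (- \<delta>\<^sup>2 / (2 * real (card vertex_pairs) * C\<^sup>2))"
    using n_pos \<delta> C bound centred indep
    by (intro G.Hoeffding_abs_ge_centred) (auto simp: vertex_pairs_def)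
  also have "- \<delta>\<^sup>2 / (2 * real (card vertex_pairs) * C\<^sup>2) = - (2 * pi\<^sup>2) * (\<delta>\<^sup>2 * real n * p\<^sup>2)"
    by (simp add: width)
  also have "\<dots> \<le> - (\<delta>\<^sup>2 * real n * p\<^sup>2)"
  proof -
    have "1 \<le> 2 * pi\<^sup>2"
      using pi_gt3 power_mono[of 3 pi 2] by simp
    then have "1 * (\<delta>\<^sup>2 * real n * p\<^sup>2) \<le> (2 * pi\<^sup>2) * (\<delta>\<^sup>2 * real n * p\<^sup>2)"
      by (intro mult_right_mono) auto
    then show ?thesis by simp
  qed
  finally show ?thesis
    by (simp add: Y_def)
qed

lemma Re_eta_coeff:
  "Re (eta_coeff \<omega> x k) = (\<Sum>a\<in>vertex_pairs. cos (phase (eta_atom x) k a) * eta_weight \<omega> a / (2 * pi))"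
  by (simp add: eta_coeff_def Re_fourier_atoms)

lemma Im_eta_coeff:
  "Im (eta_coeff \<omega> x k) = (\<Sum>a\<in>vertex_pairs. - sin (phase (eta_atom x) k a) * eta_weight \<omega> a / (2 * pi))"
  by (simp add: eta_coeff_def Im_fourier_atoms)

lemma Re_Im_eta_coeff_measurable:
  "(\<lambda>\<omega>. Re (eta_coeff \<omega> x k)) \<in> borel_measurable Mg"
  "(\<lambda>\<omega>. Im (eta_coeff \<omega> x k)) \<in> borel_measurable Mg"
  "(\<lambda>z. Re (eta_coeff (fst z) (snd z) k)) \<in> borel_measurable (Mg \<Otimes>\<^sub>M M0)"
  "(\<lambda>z. Im (eta_coeff (fst z) (snd z) k)) \<in> borel_measurable (Mg \<Otimes>\<^sub>M M0)"
proof -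
  have weight: "(\<lambda>z. eta_weight (fst z) a) \<in> borel_measurable (Mg \<Otimes>\<^sub>M M0)" if "a \<in> vertex_pairs" for a
    using eta_weight_measurable[OF that] by (rule measurable_compose[OF measurable_fst])
  have phase: "(\<lambda>z. phase (eta_atom (snd z)) k a) \<in> borel_measurable (Mg \<Otimes>\<^sub>M M0)" for a
  proof -
    have "(\<lambda>z. \<theta> i (snd z)) \<in> borel_measurable (Mg \<Otimes>\<^sub>M M0)" for i
      using theta_measurable by (rule measurable_compose[OF measurable_snd])
    then show ?thesis
      by (cases a) (simp add: phase_def eta_atom_def)
  qed
  show "(\<lambda>\<omega>. Re (eta_coeff \<omega> x k)) \<in> borel_measurable Mg"
    "(\<lambda>\<omega>. Im (eta_coeff \<omega> x k)) \<in> borel_measurable Mg"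
    unfolding Re_eta_coeff Im_eta_coeff using eta_weight_measurable by measurable
  show "(\<lambda>z. Re (eta_coeff (fst z) (snd z) k)) \<in> borel_measurable (Mg \<Otimes>\<^sub>M M0)"
    "(\<lambda>z. Im (eta_coeff (fst z) (snd z) k)) \<in> borel_measurable (Mg \<Otimes>\<^sub>M M0)"
    unfolding Re_eta_coeff Im_eta_coeff using weight phase by measurable
qed

definition large_coeff :: "real \<Rightarrow> real \<Rightarrow> 'b \<Rightarrow> 'a \<Rightarrow> bool" where
  "large_coeff \<delta> K \<omega> x \<longleftrightarrow>
     (\<exists>k\<in>freq_box K. \<delta> \<le> \<bar>Re (eta_coeff \<omega> x k)\<bar> \<or> \<delta> \<le> \<bar>Im (eta_coeff \<omega> x k)\<bar>)"

definition large_coeff_events :: "real \<Rightarrow> real \<Rightarrow> ('b \<times> 'a) set" where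
  "large_coeff_events \<delta> K = {z \<in> space (Mg \<Otimes>\<^sub>M M0). large_coeff \<delta> K (fst z) (snd z)}"

lemma large_coeff_events_sets: "large_coeff_events \<delta> K \<in> sets (Mg \<Otimes>\<^sub>M M0)"
proof -
  have "large_coeff_events \<delta> K = (\<Union>k\<in>freq_box K.
          {z \<in> space (Mg \<Otimes>\<^sub>M M0). \<delta> \<le> \<bar>Re (eta_coeff (fst z) (snd z) k)\<bar>} \<union>
          {z \<in> space (Mg \<Otimes>\<^sub>M M0). \<delta> \<le> \<bar>Im (eta_coeff (fst z) (snd z) k)\<bar>})"
    by (auto simp: large_coeff_events_def large_coeff_def)
  also have "\<dots> \<in> sets (Mg \<Otimes>\<^sub>M M0)"
    using Re_Im_eta_coeff_measurable(3,4) finite_freq_box by measurable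
  finally show ?thesis .
qed

lemma prob_large_coeff_le:
  assumes "\<delta> \<ge> 0"
  shows "G.prob {\<omega> \<in> space Mg. large_coeff \<delta> K \<omega> x}
           \<le> 4 * real (card (freq_box K)) * exp (- (\<delta>\<^sup>2 * real n * p\<^sup>2))"
proof -
  define E where "E = exp (- (\<delta>\<^sup>2 * real n * p\<^sup>2))"
  define RE where "RE k = {\<omega> \<in> space Mg. \<delta> \<le> \<bar>Re (eta_coeff \<omega> x k)\<bar>}" for k
  define IM where "IM k = {\<omega> \<in> space Mg. \<delta> \<le> \<bar>Im (eta_coeff \<omega> x k)\<bar>}" for k
  have events: "RE k \<in> G.events" "IM k \<in> G.events" for k
    unfolding RE_def IM_def using Re_Im_eta_coeff_measurable(1,2) by measurable
  have tails: "G.prob (RE k) \<le> 2 * E" "G.prob (IM k) \<le> 2 * E" for k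
    unfolding RE_def IM_def Re_eta_coeff Im_eta_coeff E_def
    using assms by (intro prob_abs_weighted_eta_sum_ge; simp)+
  have "{\<omega> \<in> space Mg. large_coeff \<delta> K \<omega> x} = (\<Union>k\<in>freq_box K. RE k \<union> IM k)"
    by (auto simp: large_coeff_def RE_def IM_def)
  also have "G.prob \<dots> \<le> (\<Sum>k\<in>freq_box K. G.prob (RE k \<union> IM k))"
    using events finite_freq_box by (intro G.finite_measure_subadditive_finite) auto
  also have "\<dots> \<le> (\<Sum>k\<in>freq_box K. 4 * E)"
  proof (rule sum_mono)
    fix k
    show "G.prob (RE k \<union> IM k) \<le> 4 * E"
      using measure_Un_le[OF events(1)[of k] events(2)[of k]] tails[of k] by linarith
  qed
  finally show ?thesis
    by (simp add: E_def)
qed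

definition bad_graphs :: "real \<Rightarrow> real \<Rightarrow> real \<Rightarrow> 'b set" where
  "bad_graphs \<delta> K \<eta> = {\<omega> \<in> space Mg. ennreal \<eta> \<le> emeasure M0 (Pair \<omega> -` large_coeff_events \<delta> K)}"

lemma bad_graphs_sets: "bad_graphs \<delta> K \<eta> \<in> G.events"
  unfolding bad_graphs_def
  using Z.measurable_emeasure_Pair[OF large_coeff_events_sets] by measurable

lemma prob_bad_graphs_le:
  assumes "\<delta> \<ge> 0" "\<eta> > 0"
  shows "G.prob (bad_graphs \<delta> K \<eta>) \<le> 4 * real (card (freq_box K)) * exp (- (\<delta>\<^sup>2 * real n * p\<^sup>2)) / \<eta>"
proof -
  interpret pair_prob_space Mg M0 ..
  define L where "L = large_coeff_events \<delta> K"
  define \<rho> where "\<rho> = 4 * real (card (freq_box K)) * exp (- (\<delta>\<^sup>2 * real n * p\<^sup>2))"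
  have L: "L \<in> sets (Mg \<Otimes>\<^sub>M M0)"
    unfolding L_def by (rule large_coeff_events_sets)
  have "ennreal \<eta> * emeasure Mg (bad_graphs \<delta> K \<eta>) = (\<integral>\<^sup>+\<omega>. ennreal \<eta> * indicator (bad_graphs \<delta> K \<eta>) \<omega> \<partial>Mg)"
    using bad_graphs_sets by (simp add: nn_integral_cmult_indicator)
  also have "\<dots> \<le> (\<integral>\<^sup>+\<omega>. emeasure M0 (Pair \<omega> -` L) \<partial>Mg)"
    by (intro nn_integral_mono) (auto simp: bad_graphs_def L_def indicator_def)
  also have "\<dots> = emeasure (Mg \<Otimes>\<^sub>M M0) L"
    by (rule Z.emeasure_pair_measure_alt[OF L, symmetric])
  also have "\<dots> = (\<integral>\<^sup>+x. emeasure Mg ((\<lambda>\<omega>. (\<omega>, x)) -` L) \<partial>M0)"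
    by (rule emeasure_pair_measure_alt2[OF L])
  also have "\<dots> \<le> (\<integral>\<^sup>+x. ennreal \<rho> \<partial>M0)"
  proof (intro nn_integral_mono)
    fix x assume "x \<in> space M0"
    then have "(\<lambda>\<omega>. (\<omega>, x)) -` L = {\<omega> \<in> space Mg. large_coeff \<delta> K \<omega> x}"
      by (auto simp: L_def large_coeff_events_def space_pair_measure)
    then show "emeasure Mg ((\<lambda>\<omega>. (\<omega>, x)) -` L) \<le> ennreal \<rho>"
      using prob_large_coeff_le[OF assms(1)] by (simp add: G.emeasure_eq_measure \<rho>_def)
  qed
  also have "\<dots> = ennreal \<rho>"
    by (simp add: Z.emeasure_space_1)
  finally have "\<eta> * G.prob (bad_graphs \<delta> K \<eta>) \<le> \<rho>"
    using assms(2) by (simp add: G.emeasure_eq_measure ennreal_mult'[symmetric] \<rho>_def)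
  then show ?thesis
    using assms(2) by (simp add: \<rho>_def field_simps)
qed

lemma norm_eta_coeff_le: "cmod (eta_coeff \<omega> x k) \<le> sqrt (real n) / p"
proof -
  have "cmod (eta_coeff \<omega> x k) \<le> real (card vertex_pairs) * (real n powr (-3/2) / p) / (2 * pi)"
    unfolding eta_coeff_def by (rule norm_fourier_atoms_le[OF abs_eta_weight_le])
  also have "real (card vertex_pairs) * real n powr (-3/2) = sqrt (real n)"
  proof -
    have "real (card vertex_pairs) * real n powr (-3/2) = real n powr 2 * real n powr (-3/2)"
      using n_pos by (simp add: card_vertex_pairs)
    also have "\<dots> = real n powr (1/2)"
      by (simp only: powr_add [symmetric]) simp
    finally show ?thesis
      by (simp add: powr_half_sqrt)
  qed
  then have "real (card vertex_pairs) * (real n powr (-3/2) / p) / (2 * pi) = sqrt (real n) / p / (2 * pi)"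
    by simp
  also have "\<dots> \<le> sqrt (real n) / p"
    using p_pos pi_gt3 by (intro divide_left_mono[of 1 "2 * pi", simplified]) auto
  finally show ?thesis .
qed

lemma expected_eta_norm_sq_le:
  assumes r: "r > 1" and K: "K > 0" and \<eta>: "\<eta> \<ge> 0" and \<omega>: "\<omega> \<in> space Mg - bad_graphs \<delta> K \<eta>"
  shows "(\<integral>x. eta_norm_sq r n p (\<lambda>i j. \<xi> i j \<omega>) (\<lambda>i. \<theta> i x) \<partial>M0)
           \<le> 2 * \<delta>\<^sup>2 * (\<Sum>\<^sub>\<infinity>k. sobolev_weight r k) + real n / p\<^sup>2 * (\<Sum>\<^sub>\<infinity>k. sobolev_weight r k) * \<eta>
              + K powr (1 - r) * (real n / p\<^sup>2) * (\<Sum>\<^sub>\<infinity>k. sobolev_weight ((r + 1) / 2) k)"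
proof -
  define W where "W = (\<Sum>\<^sub>\<infinity>k. sobolev_weight r k)"
  define T where "T = K powr (1 - r) * (real n / p\<^sup>2) * (\<Sum>\<^sub>\<infinity>k. sobolev_weight ((r + 1) / 2) k)"
  define S where "S = Pair \<omega> -` large_coeff_events \<delta> K"
  define B where "B x = 2 * \<delta>\<^sup>2 * W + T + real n / p\<^sup>2 * W * indicator S x" for x
  have W: "W \<ge> 0" and T: "T \<ge> 0"
    by (simp_all add: W_def T_def infsum_nonneg sobolev_weight_nonneg)
  have \<delta>W: "2 * \<delta>\<^sup>2 * W \<ge> 0"
    using W by simp
  have S: "S \<in> sets M0"
    unfolding S_def by (rule sets_Pair1[OF large_coeff_events_sets])
  have "Z.prob S \<le> \<eta>"
    using \<omega> \<eta> by (auto simp: bad_graphs_def S_def Z.emeasure_eq_measure not_le)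
  have M: "cmod (fourier_atoms vertex_pairs (eta_weight \<omega>) (eta_atom x) k) \<le> sqrt (real n) / p" for x k
    using norm_eta_coeff_le by (simp add: eta_coeff_def)
  have M2: "(sqrt (real n) / p)\<^sup>2 = real n / p\<^sup>2"
    by (simp add: power_divide)
  have pointwise: "eta_norm_sq r n p (\<lambda>i j. \<xi> i j \<omega>) (\<lambda>i. \<theta> i x) \<le> B x" if x: "x \<in> space M0" for x
  proof (cases "x \<in> S")
    case True
    have "eta_norm_sq r n p (\<lambda>i j. \<xi> i j \<omega>) (\<lambda>i. \<theta> i x) \<le> real n / p\<^sup>2 * W"
      using Hneg_norm_sq_le_sup_bound[OF r M, of x] by (simp add: eta_norm_sq_eq M2 W_def)
    moreover have "B x = 2 * \<delta>\<^sup>2 * W + T + real n / p\<^sup>2 * W"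
      using True by (simp add: B_def)
    ultimately show ?thesis
      using \<delta>W T by linarith
  next
    case False
    then have "\<not> large_coeff \<delta> K \<omega> x"
      using \<omega> x by (auto simp: S_def large_coeff_events_def space_pair_measure)
    then have "Hneg_norm_sq r vertex_pairs (eta_weight \<omega>) (eta_atom x) \<le> 2 * \<delta>\<^sup>2 * W + T"
      using Hneg_norm_sq_le_of_small_on_freq_box[OF r K M]
      by (auto simp: large_coeff_def eta_coeff_def W_def T_def M2 not_le)
    then show ?thesis
      using False by (simp add: eta_norm_sq_eq B_def)
  qed
  have "(\<integral>x. eta_norm_sq r n p (\<lambda>i j. \<xi> i j \<omega>) (\<lambda>i. \<theta> i x) \<partial>M0) \<le> (\<integral>x. B x \<partial>M0)"
    using S W T pointwise p_pos
    by (intro integral_mono') (auto simp: B_def less_top[symmetric] Z.prob_space)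
  also have "\<dots> = 2 * \<delta>\<^sup>2 * W + T + real n / p\<^sup>2 * W * Z.prob S"
    using S by (simp add: B_def Z.prob_space less_top[symmetric])
  also have "\<dots> \<le> 2 * \<delta>\<^sup>2 * W + T + real n / p\<^sup>2 * W * \<eta>"
    using \<open>Z.prob S \<le> \<eta>\<close> W p_pos by (intro add_left_mono mult_left_mono) auto
  finally show ?thesis
    by (simp add: W_def T_def algebra_simps)
qed

lemma inverse_p_sq_le:
  assumes "real n powr (-2/3) \<le> p\<^sup>2"
  shows "1 / p\<^sup>2 \<le> real n powr (2/3)"
proof -
  have "1 / p\<^sup>2 \<le> 1 / real n powr (-2/3)"
    using assms n_pos p_pos by (intro divide_left_mono) auto
  then show ?thesis
    by (simp add: powr_minus_divide)
qed

end

section \<open>Choice of parameters and almost sure convergence\<close>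

definition exceptional_prob_bound :: "real \<Rightarrow> nat \<Rightarrow> real" where
  "exceptional_prob_bound r n =
     4 * (2 * real n powr (3 / (r - 1)) + 3)\<^sup>2 * exp (- (real n powr (1/6))) * real n powr (8/3)"

definition eta_rate :: "real \<Rightarrow> nat \<Rightarrow> real" where
  "eta_rate r n = 2 * real n powr (-1/6) * (\<Sum>\<^sub>\<infinity>k. sobolev_weight r k) + (\<Sum>\<^sub>\<infinity>k. sobolev_weight r k) / real n
                  + real n powr (-4/3) * (\<Sum>\<^sub>\<infinity>k. sobolev_weight ((r + 1) / 2) k)"

lemma summable_exceptional_prob_bound:
  assumes "r > 1"
  shows "summable (exceptional_prob_bound r)"
proof (rule summable_comparison_test_ev)
  have "(\<lambda>n. real n powr 2 * exceptional_prob_bound r n) \<longlonglongrightarrow> 0"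
    unfolding exceptional_prob_bound_def using assms by real_asymp
  then have "\<forall>\<^sub>F n in sequentially. real n powr 2 * exceptional_prob_bound r n < 1"
    by (rule order_tendstoD) simp
  then show "\<forall>\<^sub>F n in sequentially. norm (exceptional_prob_bound r n) \<le> real n powr (-2)"
    using eventually_gt_at_top[of "0::nat"]
    by eventually_elim (simp add: exceptional_prob_bound_def powr_minus_divide field_simps)
  show "summable (\<lambda>n::nat. real n powr (-2))"
    by (subst summable_real_powr_iff) simp
qed

lemma eta_rate_tendsto_zero: "eta_rate r \<longlonglongrightarrow> 0"
proof -
  have "(\<lambda>n::nat. 2 * real n powr (-1/6) * a + a / real n + real n powr (-4/3) * c) \<longlonglongrightarrow> 0" for a c :: real
    by real_asymp
  then show ?thesis
    unfolding eta_rate_def .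
qed

context random_graph_with_initial_data
begin

definition exceptional_graphs :: "real \<Rightarrow> 'b set" where
  "exceptional_graphs r = bad_graphs (real n powr (-1/12)) (real n powr (3 / (r - 1))) (p\<^sup>2 / (real n)\<^sup>2)"

lemma exceptional_graphs_sets: "exceptional_graphs r \<in> G.events"
  by (simp add: exceptional_graphs_def bad_graphs_sets)

lemma prob_exceptional_graphs_le:
  assumes "r > 1" and p: "real n powr (-2/3) \<le> p\<^sup>2"
  shows "G.prob (exceptional_graphs r) \<le> exceptional_prob_bound r n"
proof -
  define K where "K = real n powr (3 / (r - 1))"
  have n: "real n > 0"
    using n_pos by simp
  have "real n powr (1/6) = real n powr (-1/6 + 1 + -2/3)"
    by simp
  also have "\<dots> = real n powr (-1/6) * real n * real n powr (-2/3)"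
    using n by (simp only: powr_add powr_one)
  also have "\<dots> \<le> real n powr (-1/6) * real n * p\<^sup>2"
    using n p by (intro mult_left_mono) auto
  also have "\<dots> = (real n powr (-1/12))\<^sup>2 * real n * p\<^sup>2"
    using n by (simp add: powr_power)
  finally have exponent: "exp (- ((real n powr (-1/12))\<^sup>2 * real n * p\<^sup>2)) \<le> exp (- (real n powr (1/6)))"
    by simp
  have "(real n)\<^sup>2 / p\<^sup>2 = (real n)\<^sup>2 * (1 / p\<^sup>2)"
    by simp
  also have "\<dots> \<le> (real n)\<^sup>2 * real n powr (2/3)"
    using inverse_p_sq_le[OF p] by (intro mult_left_mono) auto
  also have "\<dots> = real n powr 2 * real n powr (2/3)"
    using n by (simp add: powr_numeral)
  also have "\<dots> = real n powr (8/3)"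
    by (simp only: powr_add [symmetric]) simp
  finally have inverse: "1 / (p\<^sup>2 / (real n)\<^sup>2) \<le> real n powr (8/3)"
    by simp
  have "G.prob (exceptional_graphs r)
          \<le> 4 * real (card (freq_box K)) * exp (- ((real n powr (-1/12))\<^sup>2 * real n * p\<^sup>2)) * (1 / (p\<^sup>2 / (real n)\<^sup>2))"
    using prob_bad_graphs_le[of "real n powr (-1/12)" "p\<^sup>2 / (real n)\<^sup>2" K] n p_pos
    by (simp add: exceptional_graphs_def K_def)
  also have "\<dots> \<le> 4 * (2 * K + 3)\<^sup>2 * exp (- (real n powr (1/6))) * real n powr (8/3)"
    using card_freq_box_le[of K] exponent inverse
    by (intro mult_mono mult_left_mono) (auto simp: K_def)
  finally show ?thesis
    by (simp add: exceptional_prob_bound_def K_def)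
qed

lemma expected_eta_norm_sq_le_eta_rate:
  assumes r: "r > 1" and p: "real n powr (-2/3) \<le> p\<^sup>2" and \<omega>: "\<omega> \<in> space Mg - exceptional_graphs r"
  shows "(\<integral>x. eta_norm_sq r n p (\<lambda>i j. \<xi> i j \<omega>) (\<lambda>i. \<theta> i x) \<partial>M0) \<le> eta_rate r n"
proof -
  define W V where "W = (\<Sum>\<^sub>\<infinity>k. sobolev_weight r k)" and "V = (\<Sum>\<^sub>\<infinity>k. sobolev_weight ((r + 1) / 2) k)"
  have n: "real n > 0"
    using n_pos by simp
  have V: "V \<ge> 0"
    by (simp add: V_def infsum_nonneg sobolev_weight_nonneg)
  have "(\<integral>x. eta_norm_sq r n p (\<lambda>i j. \<xi> i j \<omega>) (\<lambda>i. \<theta> i x) \<partial>M0)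
          \<le> 2 * (real n powr (-1/12))\<^sup>2 * W + real n / p\<^sup>2 * W * (p\<^sup>2 / (real n)\<^sup>2)
            + (real n powr (3 / (r - 1))) powr (1 - r) * (real n / p\<^sup>2) * V"
    unfolding W_def V_def using \<omega> r n p_pos
    by (intro expected_eta_norm_sq_le) (auto simp: exceptional_graphs_def)
  also have "(real n powr (-1/12))\<^sup>2 = real n powr (-1/6)"
    using n by (simp add: powr_power)
  also have "real n / p\<^sup>2 * W * (p\<^sup>2 / (real n)\<^sup>2) = W / real n"
    using n p_pos by (simp add: power2_eq_square)
  also have "(real n powr (3 / (r - 1))) powr (1 - r) = real n powr (-3)"
  proof -
    have "3 / (r - 1) * (1 - r) = -3"
      using r by (simp add: field_simps)
    then show ?thesis
      by (simp add: powr_powr)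
  qed
  also have "real n powr (-3) * (real n / p\<^sup>2) * V \<le> real n powr (-4/3) * V"
  proof -
    have "real n powr (-3) * (real n / p\<^sup>2) = real n powr (-3) * real n * (1 / p\<^sup>2)"
      by simp
    also have "\<dots> \<le> real n powr (-3) * real n * real n powr (2/3)"
      using inverse_p_sq_le[OF p] n by (intro mult_left_mono) auto
    also have "\<dots> = real n powr (-3 + 1 + 2/3)"
      using n by (simp only: powr_add powr_one)
    finally show ?thesis
      using V by (intro mult_right_mono) auto
  qed
  finally show ?thesis
    by (simp add: eta_rate_def W_def V_def)
qed

end

theorem mainTheorem5:
  fixes M0 :: "'a measure" and Mg :: "'b measure"
    and p :: "nat \<Rightarrow> real"
    and \<xi> :: "nat \<Rightarrow> nat \<Rightarrow> nat \<Rightarrow> 'b \<Rightarrow> bool"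
    and \<theta> :: "nat \<Rightarrow> nat \<Rightarrow> 'a \<Rightarrow> real"
    and r \<epsilon> :: real
  assumes M0: "prob_space M0"
    and Mg: "prob_space Mg"
    and p_range: "\<forall>n\<ge>2. 0 < p n \<and> p n \<le> 1"
    and xi_meas: "\<forall>n\<ge>2. \<forall>i<n. \<forall>j<n. \<xi> n i j \<in> measurable Mg (count_space UNIV)"
    and xi_bern: "\<forall>n\<ge>2. \<forall>i<n. \<forall>j<n. measure Mg {\<omega> \<in> space Mg. \<xi> n i j \<omega>} = p n"
    and xi_indep: "\<forall>n\<ge>2. prob_space.indep_vars Mg (\<lambda>_. count_space UNIV)
                       (\<lambda>(i, j). \<xi> n i j) ({..<n} \<times> {..<n})"
    and theta_meas: "\<forall>n i. \<theta> n i \<in> borel_measurable M0"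
    and eps: "0 < \<epsilon>" "\<epsilon> < 1"
    and growth: "liminf (\<lambda>n. ereal (p n ^ 3 * real n powr (1 - \<epsilon>))) = \<infinity>"
    and r: "r > 1"
  shows "AE \<omega> in Mg.
           (\<lambda>n. \<integral>x. eta_norm_sq r n (p n) (\<lambda>i j. \<xi> n i j \<omega>) (\<lambda>i. \<theta> n i x) \<partial>M0)
             \<longlonglongrightarrow> 0"
proof -
  interpret G: prob_space Mg by (rule Mg)
  let ?R = "\<lambda>n. random_graph_with_initial_data Mg M0 n (p n) (\<xi> n) (\<theta> n)"
  have "\<forall>\<^sub>F n in sequentially. ?R n"
    using eventually_ge_at_top[of 2] proof eventually_elim
    case (elim n)
    with M0 Mg p_range xi_meas xi_bern xi_indep theta_meas show "?R n"
      by (intro random_graph_with_initial_data.intro random_graph_with_initial_data_axioms.intro) auto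
  qed
  moreover have "\<forall>\<^sub>F n in sequentially. real n powr (-2/3) \<le> p n ^ 2"
    using eps p_range
    by (intro eventually_powr_le_square_of_growth[OF growth]) (auto simp: eventually_sequentially)
  ultimately have setting: "\<forall>\<^sub>F n in sequentially. ?R n \<and> real n powr (-2/3) \<le> p n ^ 2"
    by (rule eventually_conj)
  let ?E = "\<lambda>n. random_graph_with_initial_data.exceptional_graphs Mg M0 n (p n) (\<xi> n) (\<theta> n) r"
  show ?thesis
  proof (rule G.AE_tendsto_zero_outside_summable_events[where A = ?E])
    show "\<forall>\<^sub>F n in sequentially. ?E n \<in> G.events \<and> G.prob (?E n) \<le> exceptional_prob_bound r n"
      using setting by (rule eventually_mono)
        (simp add: random_graph_with_initial_data.exceptional_graphs_sets
          random_graph_with_initial_data.prob_exceptional_graphs_le[OF _ r])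
    show "\<forall>\<^sub>F n in sequentially. \<forall>\<omega>\<in>space Mg - ?E n.
            0 \<le> (\<integral>x. eta_norm_sq r n (p n) (\<lambda>i j. \<xi> n i j \<omega>) (\<lambda>i. \<theta> n i x) \<partial>M0) \<and>
            (\<integral>x. eta_norm_sq r n (p n) (\<lambda>i j. \<xi> n i j \<omega>) (\<lambda>i. \<theta> n i x) \<partial>M0) \<le> eta_rate r n"
      using setting by (rule eventually_mono)
        (auto simp: eta_norm_sq_nonneg integral_nonneg_AE
          intro: random_graph_with_initial_data.expected_eta_norm_sq_le_eta_rate[OF _ r])
  qed (use r in \<open>simp_all add: summable_exceptional_prob_bound eta_rate_tendsto_zero\<close>)
qed

end
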